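(* Let $(\mathcal{G},\alpha)$ be an abstract GKM graph and $p\neq q$ vertices. Set $P=\prod_{e\in\mathcal{E}_p\setminus\mathcal{E}_{pq}}\alpha(e)$, $Q=\prod_{e\in\mathcal{E}_q\setminus\mathcal{E}_{qp}}\alpha(e)$, for $e\in\mathcal{E}_{pq}$ let $c(e)=|\{e'\in\mathcal{E}_{pq}: e'\neq e,\ \alpha(\overline{e'})=-\alpha(e')\}|$, and let $E=\{e\in\mathcal{E}_{pq}: c(e)\text{ even}\}$, $O=\{e\in\mathcal{E}_{pq}: c(e)\text{ odd}\}$. Then $P-Q$ is divisible by $\prod_{e\in E}\alpha(e)$ and $P+Q$ is divisible by $\prod_{e\in O}\alpha(e)$ in $H^*(BT)$.
   Context: $H^*(BT)=\mathbb{Z}[x_1,\dots,x_r]$ with $\deg x_i=2$. Let $\mathcal{G}$ be a finite $n$-valent undirected graph (multiple edges allowed, no loops) with vertex set $\mathcal{V}$ and set of directed edges $\mathcal{E}$; for $e\in\mathcal{E}$, $\overline e$ is the reversed edge, $i(e),t(e)$ its initial and terminal vertices, $\mathcal{E}_p=\{e: i(e)=p\}$, $\mathcal{E}_{pq}=\{e: i(e)=p,\ t(e)=q\}$. An axial function $\alpha:\mathcal{E}\to H^2(BT)$ satisfies: $\alpha(\overline e)=\pm\alpha(e)$; $\alpha(e),\alpha(e')$ linearly independent over $\mathbb{Z}$ if $e\ne e'$, $i(e)=i(e')$; coefficients of each $\alpha(e)$ have gcd $1$. An abstract GKM graph is such $(\mathcal{G},\alpha)$ admitting a parallel transport, i.e.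 bijections $\mathcal{P}_e:\mathcal{E}_{i(e)}\to\mathcal{E}_{t(e)}$ with $\mathcal{P}_{\overline e}=\mathcal{P}_e^{-1}$, $\mathcal{P}_e(e)=\overline e$, $\alpha(\mathcal{P}_e(e'))-\alpha(e')\in\mathbb{Z}\alpha(e)$ for all $e'\in\mathcal{E}_{i(e)}$. *)

theory Defs
  imports Main "HOL-Library.Poly_Mapping"
begin

text \<open>H^*(BT) = Z[x_1..x_r], variables indexed by a finite type 'x (r = CARD('x)),
  polynomials as finitely supported maps from monomials (exponent vectors) to int.\<close>
type_synonym 'x HBT = "('x \<Rightarrow>\<^sub>0 nat) \<Rightarrow>\<^sub>0 int"

text \<open>An element of H^2(BT) is given by its integer coefficient vector; lin turns it
  into the corresponding degree-2 (linear) polynomial.\<close>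
definition lin :: "('x::finite \<Rightarrow> int) \<Rightarrow> 'x HBT" where
  "lin a = (\<Sum>x\<in>UNIV. Poly_Mapping.single (Poly_Mapping.single x 1) (a x))"

definition out_edges :: "'e set \<Rightarrow> ('e \<Rightarrow> 'v) \<Rightarrow> 'v \<Rightarrow> 'e set" where
  "out_edges E i p = {e \<in> E. i e = p}"

definition edges_between :: "'e set \<Rightarrow> ('e \<Rightarrow> 'v) \<Rightarrow> ('e \<Rightarrow> 'v) \<Rightarrow> 'v \<Rightarrow> 'v \<Rightarrow> 'e set" where
  "edges_between E i t p q = {e \<in> E. i e = p \<and> t e = q}"

text \<open>Finite n-valent undirected graph (multiple edges allowed, no loops), given by its
  vertex set V, set of directed edges E, initial/terminal vertex maps i, t and edge reversal rv.\<close>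
definition nvalent_graph ::
  "'v set \<Rightarrow> 'e set \<Rightarrow> ('e \<Rightarrow> 'v) \<Rightarrow> ('e \<Rightarrow> 'v) \<Rightarrow> ('e \<Rightarrow> 'e) \<Rightarrow> nat \<Rightarrow> bool" where
  "nvalent_graph V E i t rv n \<longleftrightarrow>
     finite V \<and> finite E \<and>
     (\<forall>e\<in>E. i e \<in> V \<and> t e \<in> V \<and> i e \<noteq> t e) \<and>
     (\<forall>e\<in>E. rv e \<in> E \<and> rv e \<noteq> e \<and> rv (rv e) = e \<and> i (rv e) = t e \<and> t (rv e) = i e) \<and>
     (\<forall>p\<in>V. card (out_edges E i p) = n)"

definition axial_function ::
  "'e set \<Rightarrow> ('e \<Rightarrow> 'v) \<Rightarrow> ('e \<Rightarrow> 'e) \<Rightarrow> ('e \<Rightarrow> ('x \<Rightarrow> int)) \<Rightarrow> bool" where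
  "axial_function E i rv \<alpha> \<longleftrightarrow>
     (\<forall>e\<in>E. \<alpha> (rv e) = \<alpha> e \<or> \<alpha> (rv e) = - \<alpha> e) \<and>
     (\<forall>e\<in>E. \<forall>e'\<in>E. e \<noteq> e' \<and> i e = i e' \<longrightarrow>
         (\<forall>a b :: int. (\<forall>x. a * \<alpha> e x + b * \<alpha> e' x = 0) \<longrightarrow> a = 0 \<and> b = 0)) \<and>
     (\<forall>e\<in>E. Gcd (range (\<alpha> e)) = 1)"

definition parallel_transport ::
  "'e set \<Rightarrow> ('e \<Rightarrow> 'v) \<Rightarrow> ('e \<Rightarrow> 'v) \<Rightarrow> ('e \<Rightarrow> 'e) \<Rightarrow> ('e \<Rightarrow> ('x \<Rightarrow> int))
     \<Rightarrow> ('e \<Rightarrow> 'e \<Rightarrow> 'e) \<Rightarrow> bool" where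
  "parallel_transport E i t rv \<alpha> P \<longleftrightarrow>
     (\<forall>e\<in>E. bij_betw (P e) (out_edges E i (i e)) (out_edges E i (t e)) \<and>
        (\<forall>e'\<in>out_edges E i (i e). P (rv e) (P e e') = e') \<and>
        P e e = rv e \<and>
        (\<forall>e'\<in>out_edges E i (i e). \<exists>k::int. \<alpha> (P e e') - \<alpha> e' = (\<lambda>x. k * \<alpha> e x)))"

definition abstract_gkm_graph ::
  "'v set \<Rightarrow> 'e set \<Rightarrow> ('e \<Rightarrow> 'v) \<Rightarrow> ('e \<Rightarrow> 'v) \<Rightarrow> ('e \<Rightarrow> 'e) \<Rightarrow> nat
     \<Rightarrow> ('e \<Rightarrow> ('x \<Rightarrow> int)) \<Rightarrow> bool" where
  "abstract_gkm_graph V E i t rv n \<alpha> \<longleftrightarrow>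
     nvalent_graph V E i t rv n \<and> axial_function E i rv \<alpha> \<and>
     (\<exists>P. parallel_transport E i t rv \<alpha> P)"

end

theory Submission
  imports Defs "HOL-Computational_Algebra.Primes"
begin

text \<open>Fix an edge e from p to q. Parallel transport along e is a bijection from the edges at p
  other than e onto the edges at q other than its reverse, changing each weight by a multiple
  of \<alpha>(e); hence the two products of weights are congruent modulo \<alpha>(e). Both products
  contain the weights of the other p-q edges, once directly and once through their reverses,
  which differ by the sign (-1)^c(e). So \<alpha>(e) divides R((-1)^c(e) Q - P), where R is the
  product of the weights of the other p-q edges. These are linearly independent of the
  primitive linear form \<alpha>(e), which is prime to them, so \<alpha>(e) divides (-1)^c(e) Q - P.
  As the \<alpha>(e) are pairwise coprime, their products over E and over O divide P - Q and P + Q.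

  That a primitive linear form a is prime to an independent linear form b is shown without
  unique factorisation: the derivation a_k \<partial>_j - a_j \<partial>_k kills a, sends b to a nonzero
  constant and is locally nilpotent, which reduces the claim to the Gauss-type fact that a
  dividing n Z with n \<noteq> 0 divides Z.\<close>

abbreviation exp_var :: "'x \<Rightarrow> ('x \<Rightarrow>\<^sub>0 nat)" where
  "exp_var j \<equiv> Poly_Mapping.single j 1"

lemma lookup_of_int_mult:
  "Poly_Mapping.lookup (of_int k * (F :: 'a::comm_monoid_add \<Rightarrow>\<^sub>0 int)) m
     = k * Poly_Mapping.lookup F m"
proof -
  have "of_int k * F = Poly_Mapping.map ((*) k) F"
    by (metis mult_map_scale_conv_mult single_of_int of_int_eq_id id_apply)
  then show ?thesis by (simp add: Poly_Mapping.map.rep_eq when_def)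
qed

lemma frag_cmul_eq_of_int_mult:
  "frag_cmul k (F :: 'a::comm_monoid_add \<Rightarrow>\<^sub>0 int) = of_int k * F"
  by (rule poly_mapping_eqI) (simp add: lookup_of_int_mult)

lemma of_int_mult_left_cancel:
  assumes "k \<noteq> 0" and "of_int k * (F :: 'a::comm_monoid_add \<Rightarrow>\<^sub>0 int) = of_int k * G"
  shows "F = G"
proof (rule poly_mapping_eqI)
  fix m
  have "k * Poly_Mapping.lookup F m = k * Poly_Mapping.lookup G m"
    using arg_cong[OF assms(2), of "\<lambda>H. Poly_Mapping.lookup H m"] by (simp add: lookup_of_int_mult)
  with assms(1) show "Poly_Mapping.lookup F m = Poly_Mapping.lookup G m" by simp
qed

lemma keys_of_int_mult:
  "Poly_Mapping.keys (of_int k * (F :: 'a::comm_monoid_add \<Rightarrow>\<^sub>0 int)) \<subseteq> Poly_Mapping.keys F"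
  by (metis frag_cmul_eq_of_int_mult keys_cmul)

lemma lin_add: "lin (\<lambda>x. a x + b x) = lin a + lin b"
  by (simp add: lin_def single_add sum.distrib)

lemma lin_uminus: "lin (- a) = - lin a"
  by (simp add: lin_def fun_Compl_def single_uminus sum_negf)

lemma lin_scale: "lin (\<lambda>x. k * (a :: 'x::finite \<Rightarrow> int) x) = of_int k * lin a"
proof -
  have "Poly_Mapping.single m (k * c) = of_int k * Poly_Mapping.single m c"
    for m :: "'x \<Rightarrow>\<^sub>0 nat" and c :: int
    by (rule poly_mapping_eqI) (simp only: lookup_of_int_mult, simp add: lookup_single when_def)
  then show ?thesis by (simp add: lin_def sum_distrib_left)
qed

lemma minus_exp_var_add:
  assumes "Poly_Mapping.lookup m j > 0"
  shows "m - exp_var j + m' = m + m' - exp_var j"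
  using assms
  by (intro poly_mapping_eqI) (auto simp add: lookup_add lookup_minus lookup_single when_def)

lemma eq_exp_var_add_iff:
  "\<mu> = exp_var j + m \<longleftrightarrow> Poly_Mapping.lookup \<mu> j > 0 \<and> \<mu> - exp_var j = m"
  using minus_exp_var_add[of \<mu> j 0]
  by (auto simp: lookup_add lookup_minus lookup_single when_def intro!: poly_mapping_eqI)

section \<open>Partial derivatives\<close>

text \<open>On a monomial not containing x_j the truncated difference m - exp_var j is junk, but its
  coefficient is 0.\<close>

definition partial_deriv :: "'x \<Rightarrow> 'x HBT \<Rightarrow> 'x HBT" where
  "partial_deriv j =
     frag_extend (\<lambda>m. frag_cmul (int (Poly_Mapping.lookup m j)) (frag_of (m - exp_var j)))"

lemma partial_deriv_zero [simp]: "partial_deriv j 0 = 0"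
  by (simp add: partial_deriv_def)

lemma partial_deriv_add: "partial_deriv j (F + G) = partial_deriv j F + partial_deriv j G"
  by (simp add: partial_deriv_def frag_extend_add)

lemma partial_deriv_diff: "partial_deriv j (F - G) = partial_deriv j F - partial_deriv j G"
  by (simp add: partial_deriv_def frag_extend_diff)

lemma partial_deriv_frag_cmul: "partial_deriv j (frag_cmul c F) = frag_cmul c (partial_deriv j F)"
  by (simp add: partial_deriv_def frag_extend_cmul)

lemma partial_deriv_sum:
  "finite I \<Longrightarrow> partial_deriv j (\<Sum>i\<in>I. F i) = (\<Sum>i\<in>I. partial_deriv j (F i))"
  by (induction I rule: finite_induct) (simp_all add: partial_deriv_add)

lemma partial_deriv_monomial:
  "partial_deriv j (frag_of m) =
     of_int (int (Poly_Mapping.lookup m j)) * frag_of (m - exp_var j)"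
  by (simp add: partial_deriv_def frag_cmul_eq_of_int_mult)

lemma partial_deriv_of_int [simp]: "partial_deriv j (of_int c) = 0"
proof -
  have of_int_eq: "(of_int c :: 'x HBT) = frag_cmul c (frag_of 0)"
    by (simp add: frag_cmul_eq_of_int_mult)
  have "partial_deriv j (frag_of 0) = 0"
    using partial_deriv_monomial[of j 0] by simp
  then show ?thesis
    unfolding of_int_eq partial_deriv_frag_cmul by simp
qed

lemma partial_deriv_monomial_mult:
  "partial_deriv j (frag_of m * frag_of m') =
     partial_deriv j (frag_of m) * frag_of m' + frag_of m * partial_deriv j (frag_of m')"
proof -
  have left: "partial_deriv j (frag_of m) * frag_of m' =
      of_int (int (Poly_Mapping.lookup m j)) * frag_of (m + m' - exp_var j)" for m m'
  proof (cases "Poly_Mapping.lookup m j > 0")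
    case True
    then show ?thesis
      by (simp only: partial_deriv_monomial mult.assoc mult_single minus_exp_var_add mult_1)
  qed (simp add: partial_deriv_monomial)
  have right: "frag_of m * partial_deriv j (frag_of m') =
      of_int (int (Poly_Mapping.lookup m' j)) * frag_of (m + m' - exp_var j)"
    using left[of m' m] by (simp only: mult.commute[of "frag_of m"] add.commute[of m'])
  show ?thesis
    unfolding left right by (simp add: mult_single partial_deriv_monomial lookup_add distrib_right)
qed

lemma partial_deriv_mult:
  "partial_deriv j (F * G) = partial_deriv j F * G + F * partial_deriv j G"
proof -
  have monomial_left: "partial_deriv j (frag_of m * G) =
      partial_deriv j (frag_of m) * G + frag_of m * partial_deriv j G" for m
  proof -
    have "Poly_Mapping.keys G \<subseteq> UNIV" by simp
    then show ?thesis
    proof (induction G rule: frag_induction)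
      case (one m')
      show ?case by (rule partial_deriv_monomial_mult)
    next
      case (diff a b)
      then show ?case by (simp add: right_diff_distrib partial_deriv_diff algebra_simps)
    qed simp
  qed
  have "Poly_Mapping.keys F \<subseteq> UNIV" by simp
  then show ?thesis
  proof (induction F rule: frag_induction)
    case (one m)
    show ?case by (rule monomial_left)
  next
    case (diff a b)
    then show ?case by (simp add: left_diff_distrib partial_deriv_diff algebra_simps)
  qed simp
qed

lemma partial_deriv_lin: "partial_deriv j (lin (a :: 'x::finite \<Rightarrow> int)) = of_int (a j)"
proof -
  have "partial_deriv j (Poly_Mapping.single (exp_var x) c) = (if x = j then of_int c else 0)"
    for x and c :: int
  proof -
    have single_eq: "Poly_Mapping.single (exp_var x) c = frag_cmul c (frag_of (exp_var x))"
      by (rule poly_mapping_eqI) (simp add: lookup_single)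
    have "partial_deriv j (Poly_Mapping.single (exp_var x) c)
        = of_int c * (of_int (int (Poly_Mapping.lookup (exp_var x) j)) * frag_of (exp_var x - exp_var j))"
      by (simp only: single_eq partial_deriv_frag_cmul partial_deriv_monomial)
        (simp only: frag_cmul_eq_of_int_mult)
    then show ?thesis by (simp add: lookup_single)
  qed
  then show ?thesis by (simp add: lin_def partial_deriv_sum)
qed

section \<open>A locally nilpotent derivation annihilating a linear form\<close>

definition cross_deriv :: "('x \<Rightarrow> int) \<Rightarrow> 'x \<Rightarrow> 'x \<Rightarrow> 'x HBT \<Rightarrow> 'x HBT" where
  "cross_deriv a j k F = of_int (a k) * partial_deriv j F - of_int (a j) * partial_deriv k F"

lemma cross_deriv_add: "cross_deriv a j k (F + G) = cross_deriv a j k F + cross_deriv a j k G"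
  by (simp add: cross_deriv_def partial_deriv_add algebra_simps)

lemma cross_deriv_mult:
  "cross_deriv a j k (F * G) = cross_deriv a j k F * G + F * cross_deriv a j k G"
  by (simp add: cross_deriv_def partial_deriv_mult algebra_simps)

lemma cross_deriv_of_int [simp]: "cross_deriv a j k (of_int c) = 0"
  by (simp add: cross_deriv_def)

lemma cross_deriv_lin:
  "cross_deriv a j k (lin (b :: 'x::finite \<Rightarrow> int)) = of_int (a k * b j - a j * b k)"
  by (simp add: cross_deriv_def partial_deriv_lin)

lemma funpow_cross_deriv_mult_left:
  assumes "cross_deriv a j k L = 0"
  shows "(cross_deriv a j k ^^ m) (L * F) = L * (cross_deriv a j k ^^ m) F"
  by (induction m) (simp_all add: cross_deriv_mult assms)

lemma funpow_cross_deriv_lin_mult: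
  assumes "cross_deriv a j k (lin (b :: 'x::finite \<Rightarrow> int)) = of_int c"
  shows "(cross_deriv a j k ^^ Suc m) (lin b * F) =
    lin b * (cross_deriv a j k ^^ Suc m) F + of_int (int (Suc m) * c) * (cross_deriv a j k ^^ m) F"
proof (induction m)
  case 0
  then show ?case by (simp add: cross_deriv_mult assms algebra_simps)
next
  case (Suc m)
  let ?d = "cross_deriv a j k"
  have "(?d ^^ Suc (Suc m)) (lin b * F) = ?d ((?d ^^ Suc m) (lin b * F))"
    by simp
  also have "\<dots> = ?d (lin b * (?d ^^ Suc m) F) + ?d (of_int (int (Suc m) * c) * (?d ^^ m) F)"
    unfolding Suc cross_deriv_add ..
  also have "\<dots> = (of_int c * (?d ^^ Suc m) F + lin b * ?d ((?d ^^ Suc m) F))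
      + of_int (int (Suc m) * c) * ?d ((?d ^^ m) F)"
    by (simp only: cross_deriv_mult cross_deriv_of_int assms mult_zero_left add_0_left)
  also have "\<dots> = lin b * (?d ^^ Suc (Suc m)) F + of_int (int (Suc (Suc m)) * c) * (?d ^^ Suc m) F"
    by (simp add: algebra_simps)
  finally show ?case .
qed

definition exp_degree :: "('x::finite \<Rightarrow>\<^sub>0 nat) \<Rightarrow> nat" where
  "exp_degree m = (\<Sum>x\<in>UNIV. Poly_Mapping.lookup m x)"

lemma exp_degree_add: "exp_degree (m + m') = exp_degree m + exp_degree m'"
  by (simp add: exp_degree_def lookup_add sum.distrib)

lemma exp_degree_minus_exp_var:
  assumes "Poly_Mapping.lookup m j > 0"
  shows "exp_degree (m - exp_var j) + 1 = exp_degree m"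
proof -
  have "m - exp_var j + exp_var j = m"
    using assms
    by (intro poly_mapping_eqI) (auto simp add: lookup_add lookup_minus lookup_single when_def)
  moreover have "exp_degree (exp_var j) = 1"
    by (simp add: exp_degree_def lookup_single when_def)
  ultimately show ?thesis by (metis exp_degree_add)
qed

lemma keys_partial_deriv:
  assumes "Poly_Mapping.keys F \<subseteq> {m. exp_degree m < Suc N}"
  shows "Poly_Mapping.keys (partial_deriv j F) \<subseteq> {m. exp_degree m < N}"
proof -
  have "Poly_Mapping.keys (partial_deriv j F) \<subseteq> (\<Union>m\<in>Poly_Mapping.keys F.
      Poly_Mapping.keys (frag_cmul (int (Poly_Mapping.lookup m j)) (frag_of (m - exp_var j))))"
    unfolding partial_deriv_def by (rule keys_frag_extend)
  also have "\<dots> \<subseteq> {m. exp_degree m < N}"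
  proof (rule UN_least, rule subsetI)
    fix m m' assume "m \<in> Poly_Mapping.keys F"
      and "m' \<in> Poly_Mapping.keys (frag_cmul (int (Poly_Mapping.lookup m j)) (frag_of (m - exp_var j)))"
    then show "m' \<in> {m. exp_degree m < N}"
      using assms exp_degree_minus_exp_var[of m j] by auto
  qed
  finally show ?thesis .
qed

lemma keys_cross_deriv:
  assumes "Poly_Mapping.keys F \<subseteq> {m. exp_degree m < Suc N}"
  shows "Poly_Mapping.keys (cross_deriv a j k F) \<subseteq> {m. exp_degree m < N}"
  unfolding cross_deriv_def
  using keys_partial_deriv[OF assms, of j] keys_partial_deriv[OF assms, of k]
    keys_of_int_mult[of "a k" "partial_deriv j F"] keys_of_int_mult[of "a j" "partial_deriv k F"]
    keys_diff[of "of_int (a k) * partial_deriv j F" "of_int (a j) * partial_deriv k F"]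
  by blast

lemma cross_deriv_nilpotent: "\<exists>N. (cross_deriv a j k ^^ N) (F :: 'x::finite HBT) = 0"
proof -
  have bounded: "(cross_deriv a j k ^^ N) F = 0"
    if "Poly_Mapping.keys F \<subseteq> {m. exp_degree m < N}" for N F
    using that
    by (induction N arbitrary: F) (simp_all add: funpow_Suc_right keys_cross_deriv del: funpow.simps)
  have "finite (exp_degree ` Poly_Mapping.keys F)" by simp
  then obtain N where "\<forall>d\<in>exp_degree ` Poly_Mapping.keys F. d < N"
    using finite_nat_set_iff_bounded by blast
  then show ?thesis using bounded[of F N] by blast
qed

section \<open>Primitive linear forms are prime to independent ones\<close>

lemma lookup_monomial_var_mult:
  "Poly_Mapping.lookup (Poly_Mapping.single (exp_var j) c * (W :: 'x HBT)) \<mu> =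
     (if Poly_Mapping.lookup \<mu> j > 0 then c * Poly_Mapping.lookup W (\<mu> - exp_var j) else 0)"
proof -
  have "Poly_Mapping.keys W \<subseteq> UNIV" by simp
  then show ?thesis
  proof (induction W rule: frag_induction)
    case (one m)
    have "Poly_Mapping.single (exp_var j) c * frag_of m = Poly_Mapping.single (exp_var j + m) c"
      by (simp add: mult_single)
    then show ?case using eq_exp_var_add_iff[of \<mu> j m]
      by (auto simp: lookup_single when_def)
  next
    case (diff a b)
    then show ?case by (simp add: right_diff_distrib lookup_minus)
  qed simp_all
qed

lemma lookup_lin_mult:
  "Poly_Mapping.lookup (lin (a :: 'x::finite \<Rightarrow> int) * W) \<mu> =
     (\<Sum>x\<in>UNIV. if Poly_Mapping.lookup \<mu> x > 0 then a x * Poly_Mapping.lookup W (\<mu> - exp_var x) else 0)"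
  unfolding lin_def sum_distrib_right lookup_sum lookup_monomial_var_mult ..

text \<open>Gauss's lemma for a primitive linear form: look at a coefficient of W not divisible by
  p whose monomial has maximal exponent in a variable x_j with p not dividing a_j.\<close>

lemma prime_dvd_coeffs_lin_mult:
  fixes a :: "'x::finite \<Rightarrow> int" and p :: int
  assumes primitive: "Gcd (range a) = 1" and "prime p"
    and dvd_coeffs: "\<And>\<mu>. p dvd Poly_Mapping.lookup (lin a * W) \<mu>"
  shows "p dvd Poly_Mapping.lookup W \<mu>"
proof (rule ccontr)
  assume nd: "\<not> p dvd Poly_Mapping.lookup W \<mu>"
  obtain j where j: "\<not> p dvd a j"
  proof -
    have "\<not> (\<forall>x. p dvd a x)"
    proof
      assume "\<forall>x. p dvd a x"
      then have "p dvd Gcd (range a)" by (intro Gcd_greatest) auto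
      with primitive \<open>prime p\<close> show False by (simp add: not_prime_unit)
    qed
    then show ?thesis using that by blast
  qed
  define S where "S = {m \<in> Poly_Mapping.keys W. \<not> p dvd Poly_Mapping.lookup W m}"
  have "finite S" unfolding S_def by simp
  moreover have "\<mu> \<in> S" using nd unfolding S_def by (auto simp: in_keys_iff)
  ultimately have "\<exists>m. m \<in> S \<and> (\<forall>\<nu>. \<nu> \<in> S \<longrightarrow> Poly_Mapping.lookup \<nu> j \<le> Poly_Mapping.lookup m j)"
    by (intro ex_has_greatest_nat[where b = "Suc (Max ((\<lambda>\<nu>. Poly_Mapping.lookup \<nu> j) ` S))"])
      (auto intro: le_imp_less_Suc Max_ge)
  then obtain m where "m \<in> S"
    and max: "\<And>\<nu>. \<nu> \<in> S \<Longrightarrow> Poly_Mapping.lookup \<nu> j \<le> Poly_Mapping.lookup m j"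
    by blast
  define \<nu> where "\<nu> = exp_var j + m"
  have \<nu>_j: "Poly_Mapping.lookup \<nu> j > 0" and \<nu>_m: "\<nu> - exp_var j = m"
    using eq_exp_var_add_iff[of \<nu> j m] unfolding \<nu>_def by simp_all
  define f where "f x = (if Poly_Mapping.lookup \<nu> x > 0
      then a x * Poly_Mapping.lookup W (\<nu> - exp_var x) else 0)" for x
  have "p dvd f x" if "x \<noteq> j" for x
  proof -
    have "Poly_Mapping.lookup (\<nu> - exp_var x) j = Suc (Poly_Mapping.lookup m j)"
      using that by (simp add: \<nu>_def lookup_add lookup_minus lookup_single)
    then have "\<nu> - exp_var x \<notin> S" using max[of "\<nu> - exp_var x"] by linarith
    then have "p dvd Poly_Mapping.lookup W (\<nu> - exp_var x)"
      unfolding S_def by (auto simp: in_keys_iff)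
    then show ?thesis by (simp add: f_def)
  qed
  then have "p dvd sum f (UNIV - {j})" by (intro dvd_sum) simp
  moreover have "Poly_Mapping.lookup (lin a * W) \<nu> = sum f UNIV"
    unfolding lookup_lin_mult f_def ..
  moreover have "sum f UNIV = a j * Poly_Mapping.lookup W m + sum f (UNIV - {j})"
    using sum.remove[of UNIV j f] \<nu>_j \<nu>_m by (simp add: f_def)
  ultimately have "p dvd a j * Poly_Mapping.lookup W m"
    using dvd_coeffs[of \<nu>] by (metis dvd_add_left_iff)
  with \<open>prime p\<close> j have "p dvd Poly_Mapping.lookup W m" by (simp add: prime_dvd_mult_iff)
  with \<open>m \<in> S\<close> show False unfolding S_def by simp
qed

lemma lin_dvd_of_int_mult_cancel:
  fixes a :: "'x::finite \<Rightarrow> int"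
  assumes primitive: "Gcd (range a) = 1"
  shows "n \<noteq> 0 \<Longrightarrow> lin a dvd of_int n * Z \<Longrightarrow> lin a dvd Z"
proof (induction "nat \<bar>n\<bar>" arbitrary: n Z rule: less_induct)
  case less
  show ?case
  proof (cases "is_unit n")
    case True
    then have "n * n = 1" using zdvd1_eq[of n] by (auto simp: abs_if split: if_splits)
    then have "Z = of_int n * (of_int n * Z)"
      by (simp add: mult.assoc[symmetric] of_int_mult[symmetric])
    with less.prems show ?thesis by (metis dvd_mult)
  next
    case False
    then obtain p where "p dvd n" and "prime p"
      using prime_divisor_exists less.prems(1) by blast
    then obtain n' where n': "n = p * n'" by (auto elim: dvdE)
    from less.prems(2) obtain W where W: "of_int n * Z = lin a * W" by (auto elim: dvdE)
    have "p dvd Poly_Mapping.lookup W \<mu>" for \<mu>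
    proof (rule prime_dvd_coeffs_lin_mult[OF primitive \<open>prime p\<close>])
      show "p dvd Poly_Mapping.lookup (lin a * W) \<mu>" for \<mu>
        unfolding W[symmetric] lookup_of_int_mult n' by simp
    qed
    then have W_div: "W = of_int p * Poly_Mapping.map (\<lambda>v. v div p) W"
      by (intro poly_mapping_eqI) (simp add: lookup_of_int_mult Poly_Mapping.map.rep_eq when_def)
    have "p \<noteq> 0" using prime_gt_1_int[OF \<open>prime p\<close>] by simp
    have "of_int p * (of_int n' * Z) = of_int p * (lin a * Poly_Mapping.map (\<lambda>v. v div p) W)"
      using W unfolding n' by (subst (asm) W_div) (simp add: algebra_simps)
    then have "of_int n' * Z = lin a * Poly_Mapping.map (\<lambda>v. v div p) W"
      by (rule of_int_mult_left_cancel[OF \<open>p \<noteq> 0\<close>])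
    moreover have "n' \<noteq> 0" using less.prems(1) n' by simp
    moreover have "nat \<bar>n'\<bar> < nat \<bar>n\<bar>"
    proof -
      have "\<bar>p\<bar> > 1" using prime_gt_1_int[OF \<open>prime p\<close>] by simp
      then show ?thesis using n' \<open>n' \<noteq> 0\<close> by (simp add: abs_mult)
    qed
    ultimately show ?thesis using less.hyps by auto
  qed
qed

definition lin_indep :: "('x \<Rightarrow> int) \<Rightarrow> ('x \<Rightarrow> int) \<Rightarrow> bool" where
  "lin_indep a b \<longleftrightarrow> (\<forall>u v::int. (\<forall>x. u * a x + v * b x = 0) \<longrightarrow> u = 0 \<and> v = 0)"

lemma lin_indep_imp_cross_nonzero:
  assumes "lin_indep a b"
  shows "\<exists>j k. a k * b j - a j * b k \<noteq> 0"
proof (rule ccontr)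
  assume "\<not> ?thesis"
  then have cross: "b j * a x + (- a j) * b x = 0" for j x
    by (simp add: mult.commute)
  obtain j where "a j \<noteq> 0"
    using assms unfolding lin_indep_def by (metis add.right_neutral mult_1 mult_zero_left one_neq_zero)
  moreover have "b j = 0 \<and> - a j = 0"
    using assms cross[of j] unfolding lin_indep_def by blast
  ultimately show False by simp
qed

text \<open>With d = a_k \<partial>_j - a_j \<partial>_k and c = d(b) \<noteq> 0, applying d^(m+1) to b X = a Y gives
  b d^(m+1) X + (m+1) c d^m X = a d^(m+1) Y; so a | d^(m+1) X implies a | d^m X, and
  downward induction from d^N X = 0 reaches a | X.\<close>

lemma lin_dvd_mult_cancel:
  fixes a b :: "'x::finite \<Rightarrow> int"
  assumes primitive: "Gcd (range a) = 1" and "lin_indep a b" and "lin a dvd lin b * X"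
  shows "lin a dvd X"
proof -
  obtain j k where c_nonzero: "a k * b j - a j * b k \<noteq> 0"
    using lin_indep_imp_cross_nonzero[OF \<open>lin_indep a b\<close>] by blast
  define c where "c = a k * b j - a j * b k"
  define d where "d = cross_deriv a j k"
  have d_a: "d (lin a) = 0" and d_b: "d (lin b) = of_int c"
    unfolding d_def c_def cross_deriv_lin by simp_all
  obtain Y where Y: "lin b * X = lin a * Y" using assms(3) by (auto elim: dvdE)
  have step: "lin a dvd (d ^^ m) X" if "lin a dvd (d ^^ Suc m) X" for m
  proof -
    have "(d ^^ Suc m) (lin b * X) = lin b * (d ^^ Suc m) X + of_int (int (Suc m) * c) * (d ^^ m) X"
      unfolding d_def by (rule funpow_cross_deriv_lin_mult[OF d_b[unfolded d_def]])
    moreover have "(d ^^ Suc m) (lin b * X) = lin a * (d ^^ Suc m) Y"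
      unfolding Y d_def by (rule funpow_cross_deriv_mult_left[OF d_a[unfolded d_def]])
    ultimately have "lin a dvd lin b * (d ^^ Suc m) X + of_int (int (Suc m) * c) * (d ^^ m) X"
      by (metis dvd_triv_left)
    moreover have "lin a dvd lin b * (d ^^ Suc m) X"
      using that by (rule dvd_mult)
    ultimately have "lin a dvd of_int (int (Suc m) * c) * (d ^^ m) X"
      by (simp only: dvd_add_right_iff)
    moreover have "int (Suc m) * c \<noteq> 0"
      using c_nonzero unfolding c_def by simp
    ultimately show ?thesis
      by (rule lin_dvd_of_int_mult_cancel[OF primitive, rotated])
  qed
  obtain N where N: "(d ^^ N) X = 0"
    unfolding d_def using cross_deriv_nilpotent by blast
  have "lin a dvd (d ^^ (N - i)) X" for i
  proof (induction i)
    case 0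
    then show ?case by (simp add: N)
  next
    case (Suc i)
    show ?case
    proof (cases "i < N")
      case True
      then have "N - i = Suc (N - Suc i)" by simp
      with Suc.IH show ?thesis by (simp add: step)
    next
      case False
      with Suc.IH show ?thesis by simp
    qed
  qed
  from this[of N] show ?thesis by simp
qed

lemma lin_dvd_prod_mult_cancel:
  fixes a :: "'x::finite \<Rightarrow> int"
  assumes "finite S" and primitive: "Gcd (range a) = 1" and indep: "\<forall>s\<in>S. lin_indep a (\<beta> s)"
    and "lin a dvd (\<Prod>s\<in>S. lin (\<beta> s)) * X"
  shows "lin a dvd X"
  using assms(1,3,4)
proof (induction S rule: finite_induct)
  case (insert s S)
  then have "lin a dvd lin (\<beta> s) * ((\<Prod>s\<in>S. lin (\<beta> s)) * X)"
    by (simp add: mult.assoc)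
  then have "lin a dvd (\<Prod>s\<in>S. lin (\<beta> s)) * X"
    using insert.prems(1) by (blast intro: lin_dvd_mult_cancel[OF primitive])
  with insert.prems(1) show ?case by (intro insert.IH) auto
qed simp

lemma prod_lin_dvd:
  fixes \<beta> :: "'s \<Rightarrow> 'x::finite \<Rightarrow> int"
  assumes "finite S" and "\<forall>s\<in>S. Gcd (range (\<beta> s)) = 1"
    and "\<forall>s\<in>S. \<forall>s'\<in>S. s \<noteq> s' \<longrightarrow> lin_indep (\<beta> s) (\<beta> s')"
    and "\<forall>s\<in>S. lin (\<beta> s) dvd Y"
  shows "(\<Prod>s\<in>S. lin (\<beta> s)) dvd Y"
  using assms
proof (induction S rule: finite_induct)
  case (insert s S)
  then obtain W where W: "Y = (\<Prod>s\<in>S. lin (\<beta> s)) * W" by (auto elim: dvdE)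
  have "lin (\<beta> s) dvd W"
  proof (rule lin_dvd_prod_mult_cancel[OF \<open>finite S\<close>])
    show "Gcd (range (\<beta> s)) = 1" "\<forall>s'\<in>S. lin_indep (\<beta> s) (\<beta> s')"
      using insert by auto
    show "lin (\<beta> s) dvd (\<Prod>s\<in>S. lin (\<beta> s)) * W"
      using insert.prems(3) W by simp
  qed
  then show ?case
    using insert.hyps W by (simp add: mult.commute mult_dvd_mono)
qed simp

lemma dvd_prod_diff_prod:
  fixes L :: "'a::comm_ring_1"
  assumes "finite A" and "\<forall>x\<in>A. L dvd f x - g x"
  shows "L dvd (\<Prod>x\<in>A. f x) - (\<Prod>x\<in>A. g x)"
  using assms
proof (induction A rule: finite_induct)
  case (insert x A)
  have "f x * (\<Prod>x\<in>A. f x) - g x * (\<Prod>x\<in>A. g x)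
      = (f x - g x) * (\<Prod>x\<in>A. f x) + g x * ((\<Prod>x\<in>A. f x) - (\<Prod>x\<in>A. g x))"
    by (simp add: algebra_simps)
  moreover have "L dvd (f x - g x) * (\<Prod>x\<in>A. f x) + g x * ((\<Prod>x\<in>A. f x) - (\<Prod>x\<in>A. g x))"
    using insert by (intro dvd_add dvd_mult2 dvd_mult) auto
  ultimately show ?case using insert.hyps by simp
qed simp

lemma prod_sign_mult:
  assumes "finite S"
  shows "(\<Prod>x\<in>S. (if P x then - 1 else 1) * f x)
    = (- 1) ^ card {x\<in>S. P x} * (\<Prod>x\<in>S. f x :: 'a::comm_ring_1)"
proof -
  have "(\<Prod>x\<in>S. (if P x then - 1 else 1 :: 'a)) = (- 1) ^ card {x\<in>S. P x}"
    using prod.If_cases[OF assms, of P "\<lambda>_. - 1" "\<lambda>_. 1"] by (simp add: Collect_conj_eq Int_commute)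
  then show ?thesis by (simp add: prod.distrib)
qed

lemma prod_remove_split:
  assumes "finite A" and "S \<subseteq> A" and "e \<in> S"
  shows "(\<Prod>x\<in>A - {e}. f x) = (\<Prod>x\<in>A - S. f x) * (\<Prod>x\<in>S - {e}. f x)"
proof -
  have "A - {e} = (A - S) \<union> (S - {e})" using assms by auto
  moreover have "finite (A - S)" "finite (S - {e})" "(A - S) \<inter> (S - {e}) = {}"
    using assms finite_subset by auto
  ultimately show ?thesis by (simp add: prod.union_disjoint)
qed

section \<open>Weights around an edge of a GKM graph\<close>

lemma axial_function_primitive:
  "axial_function E i rv \<alpha> \<Longrightarrow> e \<in> E \<Longrightarrow> Gcd (range (\<alpha> e)) = 1"
  unfolding axial_function_def by blast

lemma axial_function_lin_indep:
  "axial_function E i rv \<alpha> \<Longrightarrow> e \<in> E \<Longrightarrow> e' \<in> E \<Longrightarrow> e \<noteq> e' \<Longrightarrow> i e = i e'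
    \<Longrightarrow> lin_indep (\<alpha> e) (\<alpha> e')"
  unfolding axial_function_def lin_indep_def by blast

lemma axial_function_lin_reverse:
  assumes "axial_function E i rv \<alpha>" and "e \<in> E"
  shows "lin (\<alpha> (rv e)) = (if \<alpha> (rv e) = - \<alpha> e then - 1 else 1) * lin (\<alpha> e)"
  using assms unfolding axial_function_def by (auto simp: lin_uminus)

lemma edges_between_reverse:
  assumes "nvalent_graph V E i t rv n"
  shows "edges_between E i t q p = rv ` edges_between E i t p q"
proof -
  have rv: "rv e \<in> E \<and> rv (rv e) = e \<and> i (rv e) = t e \<and> t (rv e) = i e" if "e \<in> E" for e
    using assms that unfolding nvalent_graph_def by blast
  show ?thesis
  proof
    show "edges_between E i t q p \<subseteq> rv ` edges_between E i t p q"
    proof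
      fix x assume "x \<in> edges_between E i t q p"
      then have "rv x \<in> edges_between E i t p q" and "x = rv (rv x)"
        using rv unfolding edges_between_def by auto
      then show "x \<in> rv ` edges_between E i t p q" by blast
    qed
    show "rv ` edges_between E i t p q \<subseteq> edges_between E i t q p"
      using rv unfolding edges_between_def by auto
  qed
qed

lemma inj_on_reverse: "nvalent_graph V E i t rv n \<Longrightarrow> inj_on rv E"
  unfolding nvalent_graph_def by (metis inj_onI)

lemma transport_prod_congruence:
  assumes "parallel_transport E i t rv \<alpha> P" and "finite E" and "e \<in> E"
  shows "lin (\<alpha> e) dvd (\<Prod>x\<in>out_edges E i (t e) - {rv e}. lin (\<alpha> x))
    - (\<Prod>x\<in>out_edges E i (i e) - {e}. lin (\<alpha> x))"
proof -
  let ?A = "out_edges E i (i e)" and ?B = "out_edges E i (t e)"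
  have bij: "bij_betw (P e) ?A ?B" and "P e e = rv e"
    and shift: "\<forall>e'\<in>?A. \<exists>k::int. \<alpha> (P e e') - \<alpha> e' = (\<lambda>x. k * \<alpha> e x)"
    using assms unfolding parallel_transport_def by auto
  have "e \<in> ?A" using \<open>e \<in> E\<close> unfolding out_edges_def by simp
  then have "rv e \<in> ?B" using bij \<open>P e e = rv e\<close> by (metis bij_betwE)
  with \<open>e \<in> ?A\<close> have "bij_betw (P e) (?A - {e}) (?B - {rv e})"
    using bij \<open>P e e = rv e\<close> by (intro bij_betw_DiffI) auto
  then have "(\<Prod>x\<in>?B - {rv e}. lin (\<alpha> x)) = (\<Prod>x\<in>?A - {e}. lin (\<alpha> (P e x)))"
    by (rule prod.reindex_bij_betw[symmetric])
  moreover have "lin (\<alpha> e) dvd (\<Prod>x\<in>?A - {e}. lin (\<alpha> (P e x))) - (\<Prod>x\<in>?A - {e}. lin (\<alpha> x))"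
  proof (rule dvd_prod_diff_prod)
    show "finite (?A - {e})" using \<open>finite E\<close> unfolding out_edges_def by simp
    show "\<forall>x\<in>?A - {e}. lin (\<alpha> e) dvd lin (\<alpha> (P e x)) - lin (\<alpha> x)"
    proof
      fix x assume "x \<in> ?A - {e}"
      then obtain k :: int where k: "\<alpha> (P e x) - \<alpha> x = (\<lambda>y. k * \<alpha> e y)" using shift by blast
      have "\<alpha> (P e x) = (\<lambda>y. \<alpha> x y + k * \<alpha> e y)"
      proof
        fix y show "\<alpha> (P e x) y = \<alpha> x y + k * \<alpha> e y" using fun_cong[OF k, of y] by simp
      qed
      then have "lin (\<alpha> (P e x)) = lin (\<alpha> x) + of_int k * lin (\<alpha> e)"
        by (simp add: lin_add lin_scale)
      then show "lin (\<alpha> e) dvd lin (\<alpha> (P e x)) - lin (\<alpha> x)" by simp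
    qed
  qed
  ultimately show ?thesis by simp
qed

lemma prod_reversed_edges:
  assumes graph: "nvalent_graph V E i t rv n" and axial: "axial_function E i rv \<alpha>"
    and e: "e \<in> edges_between E i t p q"
  shows "(\<Prod>x\<in>edges_between E i t q p - {rv e}. lin (\<alpha> x)) =
    (- 1) ^ card {e'\<in>edges_between E i t p q. e' \<noteq> e \<and> \<alpha> (rv e') = - \<alpha> e'}
    * (\<Prod>x\<in>edges_between E i t p q - {e}. lin (\<alpha> x))"
proof -
  let ?Epq = "edges_between E i t p q"
  have "?Epq \<subseteq> E" unfolding edges_between_def by auto
  have "finite E" using graph unfolding nvalent_graph_def by blast
  then have "finite (?Epq - {e})"
    by (rule finite_subset[rotated]) (use \<open>?Epq \<subseteq> E\<close> in blast)
  have inj: "inj_on rv (?Epq - {e})"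
    by (rule inj_on_subset[OF inj_on_reverse[OF graph]]) (use \<open>?Epq \<subseteq> E\<close> in blast)
  have "rv ` (?Epq - {e}) = rv ` ?Epq - rv ` {e}"
    by (rule inj_on_image_set_diff[OF inj_on_reverse[OF graph]]) (use \<open>?Epq \<subseteq> E\<close> e in auto)
  then have "edges_between E i t q p - {rv e} = rv ` (?Epq - {e})"
    by (simp only: edges_between_reverse[OF graph, of q p] image_insert image_empty)
  then have "(\<Prod>x\<in>edges_between E i t q p - {rv e}. lin (\<alpha> x)) = (\<Prod>x\<in>?Epq - {e}. lin (\<alpha> (rv x)))"
    using prod.reindex[OF inj] by simp
  also have "\<dots> = (\<Prod>x\<in>?Epq - {e}. (if \<alpha> (rv x) = - \<alpha> x then - 1 else 1) * lin (\<alpha> x))"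
  proof (rule prod.cong[OF refl])
    fix x assume "x \<in> ?Epq - {e}"
    with \<open>?Epq \<subseteq> E\<close> have "x \<in> E" by blast
    then show "lin (\<alpha> (rv x)) = (if \<alpha> (rv x) = - \<alpha> x then - 1 else 1) * lin (\<alpha> x)"
      by (rule axial_function_lin_reverse[OF axial])
  qed
  also have "\<dots> = (- 1) ^ card {x\<in>?Epq - {e}. \<alpha> (rv x) = - \<alpha> x} * (\<Prod>x\<in>?Epq - {e}. lin (\<alpha> x))"
    by (rule prod_sign_mult) fact
  also have "{x\<in>?Epq - {e}. \<alpha> (rv x) = - \<alpha> x} = {e'\<in>?Epq. e' \<noteq> e \<and> \<alpha> (rv e') = - \<alpha> e'}"
    by blast
  finally show ?thesis .
qed

lemma edge_weight_dvd_signed_diff: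
  assumes gkm: "abstract_gkm_graph V E i t rv n \<alpha>" and e: "e \<in> edges_between E i t p q"
  shows "lin (\<alpha> e) dvd
    (- 1) ^ card {e'\<in>edges_between E i t p q. e' \<noteq> e \<and> \<alpha> (rv e') = - \<alpha> e'}
      * (\<Prod>x\<in>out_edges E i q - edges_between E i t q p. lin (\<alpha> x))
    - (\<Prod>x\<in>out_edges E i p - edges_between E i t p q. lin (\<alpha> x))"
    (is "_ dvd ?sign * ?Q - ?P")
proof -
  let ?Epq = "edges_between E i t p q" and ?Eqp = "edges_between E i t q p"
  obtain P where transport: "parallel_transport E i t rv \<alpha> P"
    and graph: "nvalent_graph V E i t rv n" and axial: "axial_function E i rv \<alpha>"
    using gkm unfolding abstract_gkm_graph_def by blast
  have "finite E" using graph unfolding nvalent_graph_def by blast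
  have "e \<in> E" "i e = p" "t e = q" using e unfolding edges_between_def by auto
  have "rv e \<in> ?Eqp"
    using edges_between_reverse[OF graph, of q p] e by blast
  have finite_out: "finite (out_edges E i v)" for v
    using \<open>finite E\<close> unfolding out_edges_def by simp
  have Epq_out: "?Epq \<subseteq> out_edges E i p" and Eqp_out: "?Eqp \<subseteq> out_edges E i q"
    unfolding edges_between_def out_edges_def by auto
  define R where "R = (\<Prod>x\<in>?Epq - {e}. lin (\<alpha> x))"
  have "(\<Prod>x\<in>out_edges E i p - {e}. lin (\<alpha> x)) = ?P * R"
    unfolding R_def using finite_out Epq_out e by (rule prod_remove_split)
  moreover have "(\<Prod>x\<in>out_edges E i q - {rv e}. lin (\<alpha> x)) = ?Q * (?sign * R)"
    unfolding R_def prod_reversed_edges[OF graph axial e, symmetric]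
    using finite_out Eqp_out \<open>rv e \<in> ?Eqp\<close> by (rule prod_remove_split)
  ultimately have "lin (\<alpha> e) dvd R * (?sign * ?Q - ?P)"
    using transport_prod_congruence[OF transport \<open>finite E\<close> \<open>e \<in> E\<close>] \<open>i e = p\<close> \<open>t e = q\<close>
    by (simp add: algebra_simps)
  then show ?thesis
    unfolding R_def
  proof (rule lin_dvd_prod_mult_cancel[rotated 3])
    show "finite (?Epq - {e})" using finite_subset[OF Epq_out finite_out] by simp
    show "Gcd (range (\<alpha> e)) = 1" by (rule axial_function_primitive[OF axial \<open>e \<in> E\<close>])
    show "\<forall>s\<in>?Epq - {e}. lin_indep (\<alpha> e) (\<alpha> s)"
    proof
      fix s assume "s \<in> ?Epq - {e}"
      then have "s \<in> E" "s \<noteq> e" "i s = i e" using \<open>i e = p\<close> unfolding edges_between_def by auto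
      then show "lin_indep (\<alpha> e) (\<alpha> s)"
        using axial_function_lin_indep[OF axial \<open>e \<in> E\<close>] by auto
    qed
  qed
qed

lemma prod_edge_weights_dvd:
  assumes axial: "axial_function E i rv \<alpha>" and "finite E" and A: "A \<subseteq> out_edges E i p"
    and "\<forall>e\<in>A. lin (\<alpha> e) dvd Y"
  shows "(\<Prod>e\<in>A. lin (\<alpha> e)) dvd Y"
proof (rule prod_lin_dvd)
  have "A \<subseteq> E" using A unfolding out_edges_def by auto
  then show "finite A" using \<open>finite E\<close> by (rule finite_subset)
  show "\<forall>e\<in>A. Gcd (range (\<alpha> e)) = 1"
    using axial_function_primitive[OF axial] \<open>A \<subseteq> E\<close> by blast
  show "\<forall>e\<in>A. \<forall>e'\<in>A. e \<noteq> e' \<longrightarrow> lin_indep (\<alpha> e) (\<alpha> e')"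
    using axial_function_lin_indep[OF axial] A unfolding out_edges_def by auto
qed fact

theorem corollary4p2:
  fixes V :: "'v set" and E :: "'e set" and i t :: "'e \<Rightarrow> 'v" and rv :: "'e \<Rightarrow> 'e"
    and n :: nat and \<alpha> :: "'e \<Rightarrow> ('x::finite \<Rightarrow> int)" and p q :: 'v
  assumes "abstract_gkm_graph V E i t rv n \<alpha>"
    and "p \<in> V" and "q \<in> V" and "p \<noteq> q"
  defines "PP \<equiv> (\<Prod>e\<in>out_edges E i p - edges_between E i t p q. lin (\<alpha> e))"
    and "QQ \<equiv> (\<Prod>e\<in>out_edges E i q - edges_between E i t q p. lin (\<alpha> e))"
    and "c \<equiv> (\<lambda>e. card {e'\<in>edges_between E i t p q. e' \<noteq> e \<and> \<alpha> (rv e') = - \<alpha> e'})"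
  shows "(\<Prod>e\<in>{e\<in>edges_between E i t p q. even (c e)}. lin (\<alpha> e)) dvd (PP - QQ)
       \<and> (\<Prod>e\<in>{e\<in>edges_between E i t p q. odd (c e)}. lin (\<alpha> e)) dvd (PP + QQ)"
proof -
  have axial: "axial_function E i rv \<alpha>" and "finite E"
    using assms(1) unfolding abstract_gkm_graph_def nvalent_graph_def by blast+
  have Epq_out: "{e\<in>edges_between E i t p q. S e} \<subseteq> out_edges E i p" for S
    unfolding edges_between_def out_edges_def by auto
  have edge_dvd: "lin (\<alpha> e) dvd (- 1) ^ c e * QQ - PP" if "e \<in> edges_between E i t p q" for e
    using edge_weight_dvd_signed_diff[OF assms(1) that] unfolding PP_def QQ_def c_def by simp
  have "lin (\<alpha> e) dvd PP - QQ" if "e \<in> edges_between E i t p q" "even (c e)" for e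
  proof -
    have "(- 1) ^ c e * QQ - PP = - (PP - QQ)" using that(2) by simp
    then show ?thesis using edge_dvd[OF that(1)] by (metis dvd_minus_iff)
  qed
  moreover have "lin (\<alpha> e) dvd PP + QQ" if "e \<in> edges_between E i t p q" "odd (c e)" for e
  proof -
    have "(- 1) ^ c e * QQ - PP = - (PP + QQ)" using that(2) by simp
    then show ?thesis using edge_dvd[OF that(1)] by (metis dvd_minus_iff)
  qed
  ultimately show ?thesis
    using prod_edge_weights_dvd[OF axial \<open>finite E\<close> Epq_out[of "\<lambda>e. even (c e)"], of "PP - QQ"]
      prod_edge_weights_dvd[OF axial \<open>finite E\<close> Epq_out[of "\<lambda>e. odd (c e)"], of "PP + QQ"]
    by blast
qed

end
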